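(* Let $a_1,\ldots,a_{n+1}>0$, let $E=E(a_1,\ldots,a_n)\subset\mathbb{C}^n$, let $u=\sum_{j=1}^n\pi|z_j|^2/a_j$ on $\mathbb{C}^n$, and for $0<\varepsilon<1<\beta$ define $H_{\varepsilon,\beta}\colon E\to\mathbb{R}$ by $H_{\varepsilon,\beta}=\min\{a_{n+1}(\varepsilon+\beta u),\,a_{n+1}(1-u)\}$ and \[E^\circ_{H_{\varepsilon,\beta}}=\{(w,z)\in E\times\mathbb{C}\mid \pi|z|^2<H_{\varepsilon,\beta}(w)\}\subset\mathbb{C}^{n+1}.\] Then for any $0<\varepsilon<1<\beta$, $(E^\circ_{H_{\varepsilon,\beta}},\hat\lambda_0)$ is an open Liouville domain.
   Context: $E(a_1,\ldots,a_n)=\{(z_1,\ldots,z_n)\in\mathbb{C}^n\mid\sum_j\pi|z_j|^2/a_j\leq1\}$. $\hat\lambda_0=\frac12\sum_{j=1}^{n+1}(x_jdy_j-y_jdx_j)$ is the standard primitive on $\mathbb{C}^{n+1}$, $z_j=x_j+iy_j$. An open Liouville domain is a manifold without boundary $U$ with a 1-form $\lambda$ such that $d\lambda$ is symplectic, the flow $\mathcal{L}^t$ of the Liouville vector field $\mathcal{L}$ (defined by $d\lambda(\mathcal{L},\cdot)=\lambda$) exists on $U$ for all $t\leq0$, and $\mathcal{L}^t(U)$ has compact closure in $U$ for all $t<0$. *)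

theory Defs
  imports "HOL-Analysis.Analysis"
begin

text \<open>Points of C^n are complex^'n; C^(n+1) is (complex^'n) \<times> complex, the last
  factor being the (n+1)-st coordinate.\<close>

definition ellipsoid :: "real^'n \<Rightarrow> (complex^'n) set" where
  "ellipsoid a = {z. (\<Sum>j\<in>UNIV. pi * (cmod (z$j))^2 / a$j) \<le> 1}"

definition u_fun :: "real^'n \<Rightarrow> complex^'n \<Rightarrow> real" where
  "u_fun a z = (\<Sum>j\<in>UNIV. pi * (cmod (z$j))^2 / a$j)"

definition H_fun :: "real^'n \<Rightarrow> real \<Rightarrow> real \<Rightarrow> real \<Rightarrow> complex^'n \<Rightarrow> real" where
  "H_fun a b eps beta w = min (b * (eps + beta * u_fun a w)) (b * (1 - u_fun a w))"

definition E_circ :: "real^'n \<Rightarrow> real \<Rightarrow> real \<Rightarrow> real \<Rightarrow> ((complex^'n) \<times> complex) set" where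
  "E_circ a b eps beta = {(w, z). w \<in> ellipsoid a \<and> pi * (cmod z)^2 < H_fun a b eps beta w}"

text \<open>Standard primitive 1/2 sum (x_j dy_j - y_j dx_j), as a map point \<Rightarrow> tangent vector \<Rightarrow> real.\<close>
definition lambda0 :: "((complex^'n) \<times> complex) \<Rightarrow> ((complex^'n) \<times> complex) \<Rightarrow> real" where
  "lambda0 p v = 1/2 * ((\<Sum>j\<in>UNIV. Re (fst p $ j) * Im (fst v $ j) - Im (fst p $ j) * Re (fst v $ j))
                     + (Re (snd p) * Im (snd v) - Im (snd p) * Re (snd v)))"

definition one_form_on :: "'v::real_normed_vector set \<Rightarrow> ('v \<Rightarrow> 'v \<Rightarrow> real) \<Rightarrow> bool" where
  "one_form_on U lam \<longleftrightarrow> (\<forall>p\<in>U. linear (lam p)) \<and>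
     (\<forall>w. \<exists>D. (\<forall>p\<in>U. ((\<lambda>q. lam q w) has_derivative D p) (at p)) \<and> continuous_on U D)"

text \<open>Exterior derivative of a 1-form: d lam (v,w) = v(lam(w)) - w(lam(v)) (constant fields).\<close>
definition ext_d :: "('v::real_normed_vector \<Rightarrow> 'v \<Rightarrow> real) \<Rightarrow> 'v \<Rightarrow> 'v \<Rightarrow> 'v \<Rightarrow> real" where
  "ext_d lam p v w = frechet_derivative (\<lambda>q. lam q w) (at p) v - frechet_derivative (\<lambda>q. lam q v) (at p) w"

definition nondegenerate :: "('v::real_normed_vector \<Rightarrow> 'v \<Rightarrow> real) \<Rightarrow> bool" where
  "nondegenerate \<omega> \<longleftrightarrow> (\<forall>v. v \<noteq> 0 \<longrightarrow> (\<exists>w. \<omega> v w \<noteq> 0))"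

definition liouville_field :: "'v::real_normed_vector set \<Rightarrow> ('v \<Rightarrow> 'v \<Rightarrow> real) \<Rightarrow> ('v \<Rightarrow> 'v) \<Rightarrow> bool" where
  "liouville_field U lam L \<longleftrightarrow> (\<forall>p\<in>U. \<forall>w. ext_d lam p (L p) w = lam p w)"

text \<open>Open Liouville domain: U open (a manifold without boundary), d lam symplectic
  (exact hence closed; nondegenerate), the flow of the Liouville field exists on U
  for all t \<le> 0, and the image of U under the time-t flow has compact closure in U for t < 0.\<close>
definition open_liouville_domain :: "'v::real_normed_vector set \<Rightarrow> ('v \<Rightarrow> 'v \<Rightarrow> real) \<Rightarrow> bool" where
  "open_liouville_domain U lam \<longleftrightarrow>
     open U \<and> one_form_on U lam \<and> (\<forall>p\<in>U. nondegenerate (ext_d lam p)) \<and>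
     (\<exists>L. liouville_field U lam L \<and>
        (\<exists>\<phi>::real \<Rightarrow> 'v \<Rightarrow> 'v.
           (\<forall>p\<in>U. \<phi> 0 p = p \<and>
              (\<forall>t\<le>0. \<phi> t p \<in> U \<and>
                 ((\<lambda>s. \<phi> s p) has_vector_derivative L (\<phi> t p)) (at t within {..0}))) \<and>
           (\<forall>t<0. compact (closure (\<phi> t ` U)) \<and> closure (\<phi> t ` U) \<subseteq> U)))"

end

theory Submission
  imports Defs
begin

text \<open>Writing \<open>i\<close> for multiplication by the imaginary unit, \<open>\<lambda>\<^sub>0\<close> is the bilinear form
  \<open>\<lambda>\<^sub>0 p v = \<langle>i p, v\<rangle>/2\<close>. Hence \<open>d\<lambda>\<^sub>0 = 2\<lambda>\<^sub>0\<close> is nondegenerate, the Liouville field is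
  \<open>p/2\<close>, and its flow is the radial scaling \<open>p \<mapsto> e\<^sup>t\<^sup>/\<^sup>2 p\<close>. So every bounded open set \<open>U\<close>
  with \<open>c \<cdot> closure U \<subseteq> U\<close> for \<open>0 < c < 1\<close> is an open Liouville domain for \<open>\<lambda>\<^sub>0\<close>.
  The domain \<open>E\<^sup>\<circ>\<^sub>H\<close> is of this kind: since \<open>u(c w) = c\<^sup>2 u(w)\<close>, both affine functions in the
  minimum defining \<open>H\<close> satisfy \<open>c\<^sup>2 H(w) < H(c w)\<close> when \<open>0 < c < 1\<close>, while
  \<open>\<pi>|c z|\<^sup>2 = c\<^sup>2 \<pi>|z|\<^sup>2\<close>.\<close>

definition mult_i :: "(complex^'n) \<times> complex \<Rightarrow> (complex^'n) \<times> complex" where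
  "mult_i v = (\<chi> j. \<i> * fst v $ j, \<i> * snd v)"

lemma lambda0_eq_inner_mult_i: "lambda0 p v = inner (mult_i p) v / 2"
  by (cases p, cases v) (simp add: lambda0_def mult_i_def inner_vec_def inner_complex_def)

lemma linear_mult_i: "linear mult_i"
  by (rule linearI) (simp_all add: mult_i_def vec_eq_iff algebra_simps)

lemma inner_mult_i_left: "inner (mult_i p) v = - inner p (mult_i v)"
  by (cases p, cases v)
     (simp add: mult_i_def inner_vec_def inner_complex_def sum_negf[symmetric]
        sum.distrib[symmetric] algebra_simps)

lemma inner_mult_i_mult_i: "inner (mult_i v) (mult_i v) = inner v v"
  by (cases v) (simp add: mult_i_def inner_vec_def inner_complex_def algebra_simps)

lemma bounded_linear_lambda0_left: "bounded_linear (\<lambda>p. lambda0 p v)"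
  unfolding lambda0_eq_inner_mult_i
  by (intro bounded_linear_compose[OF bounded_linear_divide]
      bounded_linear_compose[OF bounded_linear_inner_left]
      linear_conv_bounded_linear[THEN iffD1, OF linear_mult_i])

lemma bounded_linear_lambda0_right: "bounded_linear (lambda0 p)"
  unfolding lambda0_eq_inner_mult_i
  by (intro bounded_linear_compose[OF bounded_linear_divide] bounded_linear_inner_right)

lemma lambda0_antisym: "lambda0 w v = - lambda0 v w"
  unfolding lambda0_eq_inner_mult_i inner_mult_i_left[of w] by (simp add: inner_commute)

lemma ext_d_lambda0: "ext_d lambda0 p v w = 2 * lambda0 v w"
proof -
  have "frechet_derivative (\<lambda>q. lambda0 q x) (at p) = (\<lambda>q. lambda0 q x)" for x
    by (rule frechet_derivative_at[OF bounded_linear_imp_has_derivative, symmetric])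
       (rule bounded_linear_lambda0_left)
  then show ?thesis
    unfolding ext_d_def using lambda0_antisym[of w v] by simp
qed

lemma nondegenerate_ext_d_lambda0:
  fixes p :: "(complex^'n) \<times> complex"
  shows "nondegenerate (ext_d lambda0 p)"
  unfolding nondegenerate_def
proof (intro allI impI)
  fix v :: "(complex^'n) \<times> complex"
  assume "v \<noteq> 0"
  then have "ext_d lambda0 p v (mult_i v) > 0"
    by (simp add: ext_d_lambda0 lambda0_eq_inner_mult_i inner_mult_i_mult_i)
  then show "\<exists>w. ext_d lambda0 p v w \<noteq> 0" by (metis less_irrefl)
qed

lemma one_form_on_lambda0: "one_form_on U lambda0"
  unfolding one_form_on_def
proof (intro conjI ballI allI)
  show "linear (lambda0 p)" for p
    by (rule bounded_linear.linear[OF bounded_linear_lambda0_right])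
  show "\<exists>D. (\<forall>p\<in>U. ((\<lambda>q. lambda0 q w) has_derivative D p) (at p)) \<and> continuous_on U D" for w
    by (intro exI[of _ "\<lambda>_ q. lambda0 q w"] conjI ballI continuous_on_const
        bounded_linear_imp_has_derivative bounded_linear_lambda0_left)
qed

lemma liouville_field_lambda0: "liouville_field U lambda0 (\<lambda>p. (1/2) *\<^sub>R p)"
  unfolding liouville_field_def ext_d_lambda0
    linear_scale[OF bounded_linear.linear[OF bounded_linear_lambda0_left]]
  by simp

lemma open_liouville_domain_lambda0I:
  fixes U :: "((complex^'n) \<times> complex) set"
  assumes "open U" and "bounded U"
    and shrink: "\<And>c. 0 < c \<Longrightarrow> c < 1 \<Longrightarrow> (*\<^sub>R) c ` closure U \<subseteq> U"
  shows "open_liouville_domain U lambda0"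
proof -
  define \<phi> where "\<phi> t p = exp (t/2) *\<^sub>R p" for t and p :: "(complex^'n) \<times> complex"
  have flow_in: "\<phi> t p \<in> U" if "p \<in> U" "t \<le> 0" for p t
    using shrink[of "exp (t/2)"] closure_subset that
    by (cases "t = 0") (auto simp: \<phi>_def)
  have flow_deriv: "((\<lambda>s. \<phi> s p) has_vector_derivative (1/2) *\<^sub>R \<phi> t p) (at t within {..0})"
    for p t
    unfolding \<phi>_def by (auto intro!: derivative_eq_intros)
  have flow_image: "compact (closure (\<phi> t ` U)) \<and> closure (\<phi> t ` U) \<subseteq> U" if "t < 0" for t
  proof -
    have image_eq: "\<phi> t ` U = (*\<^sub>R) (exp (t/2)) ` U"
      by (auto simp: \<phi>_def)
    show ?thesis
      unfolding image_eq closure_scaleR[symmetric]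
      using shrink[of "exp (t/2)"] \<open>t < 0\<close> \<open>bounded U\<close>
      by (simp add: compact_scaling compact_closure)
  qed
  show ?thesis
    unfolding open_liouville_domain_def
    using \<open>open U\<close> one_form_on_lambda0 nondegenerate_ext_d_lambda0 liouville_field_lambda0
      flow_in flow_deriv flow_image
    by (intro conjI exI[of _ "\<lambda>p. (1/2) *\<^sub>R p"] exI[of _ \<phi>]) (auto simp: \<phi>_def)
qed

lemma u_fun_nonneg: "\<forall>j. a$j > 0 \<Longrightarrow> 0 \<le> u_fun a w"
  unfolding u_fun_def by (intro sum_nonneg divide_nonneg_pos) auto

lemma u_fun_scaleR: "u_fun a (c *\<^sub>R w) = c^2 * u_fun a w"
  unfolding u_fun_def sum_distrib_left by (rule sum.cong) (auto simp: power_mult_distrib)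

lemma ellipsoid_eq_u_fun_le: "ellipsoid a = {w. u_fun a w \<le> 1}"
  unfolding ellipsoid_def u_fun_def ..

lemma continuous_on_H_fun: "continuous_on S (H_fun a b eps beta)"
  unfolding H_fun_def u_fun_def divide_inverse by (intro continuous_intros)

lemma H_fun_scaleR_gt:
  assumes "b > 0" "eps > 0" "0 < c" "c < 1"
  shows "c^2 * H_fun a b eps beta w < H_fun a b eps beta (c *\<^sub>R w)"
proof -
  have "c^2 < 1"
    using assms by (simp add: power_less_one_iff)
  then have "c^2 * (b * (eps + beta * u_fun a w)) < b * (eps + beta * u_fun a (c *\<^sub>R w))"
    and "c^2 * (b * (1 - u_fun a w)) < b * (1 - u_fun a (c *\<^sub>R w))"
    using assms by (simp_all add: u_fun_scaleR algebra_simps)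
  then show ?thesis
    unfolding H_fun_def min_mult_distrib_left by (simp add: min_less_iff_disj)
qed

lemma le_H_fun_bounds:
  assumes "\<forall>j. a$j > 0" "b > 0" "0 \<le> x" "x \<le> H_fun a b eps beta w"
  shows "u_fun a w \<le> 1" and "x \<le> b"
proof -
  have "x \<le> b * (1 - u_fun a w)"
    using assms(4) by (simp add: H_fun_def)
  moreover have "0 \<le> b * u_fun a w"
    using u_fun_nonneg[OF assms(1)] assms(2) by simp
  ultimately show "x \<le> b"
    using assms(3) by (simp add: algebra_simps)
  from \<open>x \<le> b * (1 - u_fun a w)\<close> have "b * u_fun a w \<le> b * 1"
    using assms(3) by (simp add: algebra_simps)
  then show "u_fun a w \<le> 1"
    using assms(2) by (simp only: mult_le_cancel_left_pos)
qed

lemma E_circ_eq: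
  assumes "\<forall>j. a$j > 0" "b > 0"
  shows "E_circ a b eps beta = {p. pi * (cmod (snd p))^2 < H_fun a b eps beta (fst p)}"
proof -
  have "u_fun a w \<le> 1" if "pi * (cmod z)^2 < H_fun a b eps beta w" for w z
    using le_H_fun_bounds(1)[OF assms _ less_imp_le[OF that]] by simp
  then show ?thesis
    unfolding E_circ_def ellipsoid_eq_u_fun_le by auto
qed

lemma open_E_circ:
  assumes "\<forall>j. a$j > 0" "b > 0"
  shows "open (E_circ a b eps beta)"
  unfolding E_circ_eq[OF assms]
  by (intro open_Collect_less continuous_intros
      continuous_on_compose2[OF continuous_on_H_fun[of UNIV]]) auto

definition E_closed :: "real^'n \<Rightarrow> real \<Rightarrow> real \<Rightarrow> real \<Rightarrow> ((complex^'n) \<times> complex) set" where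
  "E_closed a b eps beta = {p. pi * (cmod (snd p))^2 \<le> H_fun a b eps beta (fst p)}"

lemma closure_E_circ_subset:
  assumes "\<forall>j. a$j > 0" "b > 0"
  shows "closure (E_circ a b eps beta) \<subseteq> E_closed a b eps beta"
proof (rule closure_minimal)
  show "E_circ a b eps beta \<subseteq> E_closed a b eps beta"
    unfolding E_circ_eq[OF assms] E_closed_def by auto
  show "closed (E_closed a b eps beta)"
    unfolding E_closed_def
    by (intro closed_Collect_le continuous_intros
        continuous_on_compose2[OF continuous_on_H_fun[of UNIV]]) auto
qed

lemma bounded_ellipsoid:
  assumes "\<forall>j. a$j > 0"
  shows "bounded (ellipsoid a)"
proof -
  have "norm w \<le> (\<Sum>j\<in>UNIV. sqrt (a$j / pi))" if "w \<in> ellipsoid a" for w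
  proof -
    have "cmod (w$j) \<le> sqrt (a$j / pi)" for j
    proof (rule real_le_rsqrt)
      have "pi * (cmod (w$j))^2 / a$j \<le> u_fun a w"
        unfolding u_fun_def using assms
        by (intro member_le_sum[of j UNIV "\<lambda>j. pi * (cmod (w$j))^2 / a$j"])
           (auto intro: divide_nonneg_pos)
      also have "\<dots> \<le> 1"
        using that by (simp add: ellipsoid_eq_u_fun_le)
      finally show "(cmod (w$j))^2 \<le> a$j / pi"
        using assms by (simp add: field_simps mult.commute)
    qed
    then have "(\<Sum>j\<in>UNIV. cmod (w$j)) \<le> (\<Sum>j\<in>UNIV. sqrt (a$j / pi))"
      by (rule sum_mono)
    moreover have "norm w \<le> (\<Sum>j\<in>UNIV. cmod (w$j))"
      unfolding norm_vec_def by (rule L2_set_le_sum) simp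
    ultimately show ?thesis by linarith
  qed
  then show ?thesis
    unfolding bounded_iff by blast
qed

lemma bounded_E_closed:
  assumes "\<forall>j. a$j > 0" "b > 0"
  shows "bounded (E_closed a b eps beta)"
proof (rule bounded_subset)
  show "bounded (ellipsoid a \<times> cball 0 (sqrt (b / pi)))"
    using bounded_ellipsoid[OF assms(1)] bounded_cball by (rule bounded_Times)
  show "E_closed a b eps beta \<subseteq> ellipsoid a \<times> cball 0 (sqrt (b / pi))"
  proof
    fix p
    assume "p \<in> E_closed a b eps beta"
    then have le_H: "pi * (cmod (snd p))^2 \<le> H_fun a b eps beta (fst p)"
      by (simp add: E_closed_def)
    have "fst p \<in> ellipsoid a"
      using le_H_fun_bounds(1)[OF assms _ le_H] by (simp add: ellipsoid_eq_u_fun_le)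
    have "pi * (cmod (snd p))^2 \<le> b"
      using le_H_fun_bounds(2)[OF assms _ le_H] by simp
    then have "(cmod (snd p))^2 \<le> b / pi"
      by (simp add: field_simps mult.commute)
    then have "snd p \<in> cball 0 (sqrt (b / pi))"
      by (simp add: real_le_rsqrt)
    with \<open>fst p \<in> ellipsoid a\<close> show "p \<in> ellipsoid a \<times> cball 0 (sqrt (b / pi))"
      by (simp add: mem_Times_iff)
  qed
qed

lemma scaleR_E_closed_subset:
  assumes "\<forall>j. a$j > 0" "b > 0" "eps > 0" "0 < c" "c < 1"
  shows "(*\<^sub>R) c ` E_closed a b eps beta \<subseteq> E_circ a b eps beta"
proof
  fix q
  assume "q \<in> (*\<^sub>R) c ` E_closed a b eps beta"
  then obtain w z where q: "q = (c *\<^sub>R w, c *\<^sub>R z)"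
    and "pi * (cmod z)^2 \<le> H_fun a b eps beta w"
    by (fastforce simp: E_closed_def)
  then have "c^2 * (pi * (cmod z)^2) \<le> c^2 * H_fun a b eps beta w"
    by (simp add: mult_left_mono)
  also have "\<dots> < H_fun a b eps beta (c *\<^sub>R w)"
    using H_fun_scaleR_gt[OF assms(2-5)] .
  finally have "c^2 * (pi * (cmod z)^2) < H_fun a b eps beta (c *\<^sub>R w)" .
  then show "q \<in> E_circ a b eps beta"
    unfolding q E_circ_eq[OF assms(1,2)]
    using assms(4) by (simp add: power_mult_distrib algebra_simps)
qed

theorem proposition5p1:
  fixes a :: "real^'n" and b eps beta :: real
  assumes "\<forall>j. a$j > 0" and "b > 0"
    and "0 < eps" and "eps < 1" and "1 < beta"
  shows "open_liouville_domain (E_circ a b eps beta) lambda0"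
proof (rule open_liouville_domain_lambda0I)
  \<comment> \<open>Only \<open>b, eps > 0\<close> enter the argument.\<close>
  show "open (E_circ a b eps beta)"
    using open_E_circ[OF assms(1,2)] .
  show "bounded (E_circ a b eps beta)"
    using bounded_E_closed[OF assms(1,2)] closure_E_circ_subset[OF assms(1,2)] closure_subset
    by (meson bounded_subset subset_trans)
  show "(*\<^sub>R) c ` closure (E_circ a b eps beta) \<subseteq> E_circ a b eps beta" if "0 < c" "c < 1" for c
    using closure_E_circ_subset[OF assms(1,2)] scaleR_E_closed_subset[OF assms(1-3) that]
    by blast
qed

end
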